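(* For every integer $N\ge4$, $$\frac{h_N'''(0)}{h_N(0)}-\frac{h_{N-1}'''(0)}{h_{N-1}(0)}-\frac32\left(\frac{h_N'(0)}{h_N(0)}\right)^2-\frac{21}{2}\left(\frac{h_{N-2}(0)}{h_{N-1}(0)}-\frac74\right)=0.$$
   Context: $h_N(z)={}_2F_1(-N+1,N;2N;1-z)=\sum_{r=1}^N H_N^{(r)}z^{r-1}$ with $H_N^{(r)}=\binom{N+r-2}{N-1}\binom{2N-1-r}{N-1}/\binom{3N-2}{N-1}$ (the ice-point boundary one-point generating function). *)

theory Defs
  imports "HOL-Computational_Algebra.Polynomial"
begin

text \<open>Coefficients H_N^(r) of the ice-point boundary one-point generating function.\<close>
definition Hcoef :: "nat \<Rightarrow> nat \<Rightarrow> real" where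
  "Hcoef N r = real ((N + r - 2) choose (N - 1)) * real ((2*N - 1 - r) choose (N - 1))
               / real ((3*N - 2) choose (N - 1))"

definition hpoly :: "nat \<Rightarrow> real poly" where
  "hpoly N = (\<Sum>r = 1..N. monom (Hcoef N r) (r - 1))"

end

theory Submission
  imports Defs
begin

(* Every quantity in the identity is a ratio of coefficients of the polynomials h_M, i.e. a ratio
   of products of binomial coefficients, and these ratios collapse to rational functions:
     h_N'(0) / h_N(0) = N / 2,
     h_N'''(0) / h_N(0) = N (N+1) (N+2) (N-3) / (4 (2N-3)),
     h_M(0) / h_(M+1)(0) = 3 (3M-1) (3M+1) / (4 (2M-1) (2M+1)).
   The theorem is then an identity between rational functions of N. *)

lemma poly_higher_pderiv_0: "poly ((pderiv ^^ k) p) 0 = fact k * coeff p k"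
  by (simp add: poly_0_coeff_0 coeff_higher_pderiv pochhammer_fact)

lemma coeff_hpoly:
  assumes "2 \<le> N" shows "coeff (hpoly N) k = Hcoef N (k + 1)"
proof -
  have "coeff (hpoly N) k = (\<Sum>r \<in> {1..N}. if r = k + 1 then Hcoef N r else 0)"
    unfolding hpoly_def coeff_sum coeff_monom by (intro sum.cong) auto
  also have "\<dots> = Hcoef N (k + 1)"
  proof (cases "k < N")
    case False
    then have "(2 * N - 1 - (k + 1)) choose (N - 1) = 0"
      using assms by (simp add: binomial_eq_0)
    with False show ?thesis by (simp add: Hcoef_def)
  qed simp
  finally show ?thesis .
qed

lemma hpoly_pderiv_ratio_0:
  assumes "2 \<le> N"
  shows "poly (pderiv (hpoly N)) 0 / poly (hpoly N) 0 = real N / 2"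
proof -
  obtain n where N: "N = n + 2" using assms by (metis add.commute le_Suc_ex)
  show ?thesis
    unfolding poly_0_coeff_0 coeff_pderiv
    by (simp add: coeff_hpoly N Hcoef_def binomial_fact numeral_eq_Suc add_Suc_right
        del: binomial_Suc_Suc)
       (simp add: field_simps)
qed

lemma hpoly_pderiv3_ratio_0:
  assumes "3 \<le> N"
  shows "poly ((pderiv ^^ 3) (hpoly N)) 0 / poly (hpoly N) 0
         = real N * (real N + 1) * (real N + 2) * (real N - 3) / (4 * (2 * real N - 3))"
proof (cases "N = 3")
  case True
  \<comment> \<open>h_3 has degree 2, so both sides vanish\<close>
  then show ?thesis
    unfolding poly_higher_pderiv_0 unfolding poly_0_coeff_0 by (simp add: coeff_hpoly Hcoef_def)
next
  case False
  define n where "n = N - 4"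
  have N: "N = n + 4" using assms False unfolding n_def by linarith
  show ?thesis
    unfolding poly_higher_pderiv_0 unfolding poly_0_coeff_0
    by (simp add: coeff_hpoly N Hcoef_def binomial_fact numeral_eq_Suc add_Suc_right
        del: binomial_Suc_Suc)
       (simp add: divide_simps, simp add: algebra_simps)
qed

lemma hpoly_0_ratio_Suc:
  assumes "2 \<le> M"
  shows "poly (hpoly M) 0 / poly (hpoly (Suc M)) 0
         = 3 * (3 * real M - 1) * (3 * real M + 1) / (4 * (2 * real M - 1) * (2 * real M + 1))"
proof -
  obtain m where M: "M = m + 2" using assms by (metis add.commute le_Suc_ex)
  show ?thesis
    unfolding poly_0_coeff_0
    by (simp add: coeff_hpoly M Hcoef_def binomial_fact numeral_eq_Suc add_Suc_right
        del: binomial_Suc_Suc)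
       (simp add: divide_simps, simp add: algebra_simps)
qed

lemma hpoly_ratios_rational_identity:
  fixes x :: real
  assumes "2 * x \<noteq> 3" "2 * x \<noteq> 5"
  shows "x * (x + 1) * (x + 2) * (x - 3) / (4 * (2 * x - 3))
         - (x - 1) * (x - 1 + 1) * (x - 1 + 2) * (x - 1 - 3) / (4 * (2 * (x - 1) - 3))
         - 3/2 * (x / 2)^2
         - 21/2 * (3 * (3 * (x - 2) - 1) * (3 * (x - 2) + 1)
                   / (4 * (2 * (x - 2) - 1) * (2 * (x - 2) + 1)) - 7/4) = 0"
proof -
  have "2 * x - 3 \<noteq> 0" "2 * (x - 1) - 3 \<noteq> 0" "2 * (x - 2) - 1 \<noteq> 0" "2 * (x - 2) + 1 \<noteq> 0"
    using assms by auto
  then show ?thesis by (simp add: divide_simps) (simp add: algebra_simps power2_eq_square)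
qed

theorem mainTheorem8:
  fixes N :: nat
  assumes "N \<ge> 4"
  shows "poly ((pderiv ^^ 3) (hpoly N)) 0 / poly (hpoly N) 0
         - poly ((pderiv ^^ 3) (hpoly (N - 1))) 0 / poly (hpoly (N - 1)) 0
         - 3/2 * (poly (pderiv (hpoly N)) 0 / poly (hpoly N) 0)^2
         - 21/2 * (poly (hpoly (N - 2)) 0 / poly (hpoly (N - 1)) 0 - 7/4) = 0"
proof -
  have N3: "3 \<le> N" "3 \<le> N - 1" and N2: "2 \<le> N" "2 \<le> N - 2"
    and shift: "Suc (N - 2) = N - 1"
    using assms by auto
  have cast: "real (N - 1) = real N - 1" "real (N - 2) = real N - 2"
    using assms by auto
  have "2 * real N \<noteq> 3" "2 * real N \<noteq> 5"
    using assms by linarith+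
  then show ?thesis
    unfolding hpoly_pderiv3_ratio_0[OF N3(1)] hpoly_pderiv3_ratio_0[OF N3(2)]
      hpoly_pderiv_ratio_0[OF N2(1)] hpoly_0_ratio_Suc[OF N2(2), unfolded shift] cast
    by (rule hpoly_ratios_rational_identity)
qed

end
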